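(* Let $r\in\mathbb{N}$ and let $\bm{{\mathcal H}_x},\bm{{\mathcal H}_y}$ be finite sets of vectors of $(r+1)$-vertex graphs (each graph endowed with an ordered pair of distinguished vertices), with $t_x:=|\bm{{\mathcal H}_x}|$ and $t_y:=|\bm{{\mathcal H}_y}|$. Let $\beta_x,\beta_y,\epsilon>0$. Suppose $G$ is a sufficiently large $n$-vertex graph, $x,y\in V(G)$, and there is $U\subseteq V(G)$ with $|U|\geq\epsilon n$ such that for every $z\in U$, $x$ and $z$ are $(\bm{{\mathcal H}_x};\beta_x)$-reachable and $z$ and $y$ are $(\bm{{\mathcal H}_y};\beta_y)$-reachable. Then $x$ and $y$ are $(\bm{{\mathcal H}_x}+\bm{{\mathcal H}_y};\beta)$-reachable, where $\beta:=\frac{\epsilon\beta_x\beta_y}{2t_xt_y}$.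
   Context: Let $\bm{H}=(H^1,\dots,H^t)$ be a vector of $(r+1)$-vertex graphs, each $H^i$ with an ordered pair of distinct distinguished vertices $(w_1^i,w_2^i)$. An $\bm{H}$-path is obtained by taking vertex-disjoint copies of $H^1,\dots,H^t$ and identifying $w_2^i$ with $w_1^{i+1}$ for $i\in[t-1]$; its endpoints are $w_1^1$ and $w_2^t$. Two vertices $x,y$ of an $n$-vertex graph $G$ are $(\bm{H};\beta)$-reachable if there are at least $\beta n^{tr-1}$ distinct labelled embeddings of the $\bm{H}$-path into $G$ mapping the endpoints to $\{x,y\}$. For a set $\bm{{\mathcal H}}$ of such vectors, $x,y$ are $(\bm{{\mathcal H}};\beta)$-reachable if they are $(\bm{H};\beta)$-reachable for some $\bm{H}\in\bm{{\mathcal H}}$. For two such sets, $\bm{{\mathcal H}}+\tilde{\bm{{\mathcal H}}}:=\bm{{\mathcal H}}\cup\tilde{\bm{{\mathcal H}}}\cup\{(H^1,\dots,H^t,\tilde H^1,\dots,\tilde H^{\tilde t}):(H^1,\dots,H^t)\in\bm{{\mathcal H}},(\tilde H^1,\dots,\tilde H^{\tilde t})\in\tilde{\bm{{\mathcal H}}}\}$. *)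

theory Defs
  imports Main "HOL.Real"
begin

text \<open>A rooted small graph: edge relation on the vertex set {0..r}, together with
  an ordered pair of distinguished vertices (w1, w2).\<close>
type_synonym rgraph = "(nat \<Rightarrow> nat \<Rightarrow> bool) \<times> nat \<times> nat"

definition hE :: "rgraph \<Rightarrow> nat \<Rightarrow> nat \<Rightarrow> bool" where "hE H = fst H"
definition hw1 :: "rgraph \<Rightarrow> nat" where "hw1 H = fst (snd H)"
definition hw2 :: "rgraph \<Rightarrow> nat" where "hw2 H = snd (snd H)"

definition rooted_graph :: "nat \<Rightarrow> rgraph \<Rightarrow> bool" where
  "rooted_graph r H \<longleftrightarrow>
     (\<forall>u v. hE H u v \<longrightarrow> u \<le> r \<and> v \<le> r \<and> u \<noteq> v \<and> hE H v u) \<and>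
     hw1 H \<le> r \<and> hw2 H \<le> r \<and> hw1 H \<noteq> hw2 H"

definition sgraph :: "nat set \<Rightarrow> (nat \<Rightarrow> nat \<Rightarrow> bool) \<Rightarrow> bool" where
  "sgraph V E \<longleftrightarrow> finite V \<and> (\<forall>u v. E u v \<longrightarrow> u \<in> V \<and> v \<in> V \<and> u \<noteq> v \<and> E v u)"

text \<open>Labelled embeddings of the Hs-path into G sending the first endpoint w1 of the
  first copy to x and the last endpoint w2 of the last copy to y.  An embedding is
  represented by the family of maps (f i) on the vertex set {0..r} of the i-th copy
  (normalised to 0 outside the domain); consecutive copies agree on the identified
  vertices, each copy is mapped homomorphically into G, and the induced map on the
  vertex set of the path (copies modulo the identifications) is injective.\<close>
definition path_embeddings ::
  "nat \<Rightarrow> rgraph list \<Rightarrow> nat set \<Rightarrow> (nat \<Rightarrow> nat \<Rightarrow> bool) \<Rightarrow> nat \<Rightarrow> nat \<Rightarrow> (nat \<Rightarrow> nat \<Rightarrow> nat) set" where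
  "path_embeddings r Hs V E x y = {f.
     (\<forall>i v. (length Hs \<le> i \<or> r < v) \<longrightarrow> f i v = 0) \<and>
     (\<forall>i<length Hs. \<forall>v\<le>r. f i v \<in> V) \<and>
     (\<forall>i<length Hs. \<forall>u\<le>r. \<forall>v\<le>r. hE (Hs!i) u v \<longrightarrow> E (f i u) (f i v)) \<and>
     (\<forall>i. Suc i < length Hs \<longrightarrow> f i (hw2 (Hs!i)) = f (Suc i) (hw1 (Hs!Suc i))) \<and>
     (\<forall>i<length Hs. \<forall>j<length Hs. \<forall>u\<le>r. \<forall>v\<le>r. f i u = f j v \<longrightarrow>
         (i = j \<and> u = v) \<or>
         (j = Suc i \<and> u = hw2 (Hs!i) \<and> v = hw1 (Hs!j)) \<or>
         (i = Suc j \<and> v = hw2 (Hs!j) \<and> u = hw1 (Hs!i))) \<and>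
     f 0 (hw1 (Hs!0)) = x \<and>
     f (length Hs - 1) (hw2 (Hs!(length Hs - 1))) = y}"

definition reachable ::
  "nat \<Rightarrow> rgraph list \<Rightarrow> real \<Rightarrow> nat set \<Rightarrow> (nat \<Rightarrow> nat \<Rightarrow> bool) \<Rightarrow> nat \<Rightarrow> nat \<Rightarrow> bool" where
  "reachable r Hs \<beta> V E x y \<longleftrightarrow>
     real (card (path_embeddings r Hs V E x y)) \<ge> \<beta> * real (card V) ^ (length Hs * r - 1)"

definition reachable_set ::
  "nat \<Rightarrow> rgraph list set \<Rightarrow> real \<Rightarrow> nat set \<Rightarrow> (nat \<Rightarrow> nat \<Rightarrow> bool) \<Rightarrow> nat \<Rightarrow> nat \<Rightarrow> bool" where
  "reachable_set r HH \<beta> V E x y \<longleftrightarrow> (\<exists>Hs\<in>HH. reachable r Hs \<beta> V E x y)"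

definition vec_plus :: "rgraph list set \<Rightarrow> rgraph list set \<Rightarrow> rgraph list set" where
  "vec_plus A B = A \<union> B \<union> {a @ b | a b. a \<in> A \<and> b \<in> B}"

end

theory Submission
  imports Defs "HOL-Library.FuncSet"
begin

text \<open>An embedding of an \<open>H\<close>-path with \<open>t\<close> copies is determined by the images of the
  \<open>tr + 1\<close> vertices of the path, so prescribing \<open>k\<close> of them leaves at most \<open>n^(tr + 1 - k)\<close>
  embeddings. Fix a midpoint \<open>z \<in> U\<close> and types \<open>a \<in> Hx\<close>, \<open>b \<in> Hy\<close> witnessing its
  reachability: there are at least \<open>\<beta>x \<beta>y n^((t_a + t_b) r - 2)\<close> pairs of an \<open>x\<close>-\<open>z\<close>
  embedding of the \<open>a\<close>-path and a \<open>z\<close>-\<open>y\<close> embedding of the \<open>b\<close>-path. A pair whose images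
  meet away from \<open>z\<close> prescribes one more vertex, so there are only \<open>O(n^((t_a + t_b) r - 3))\<close>
  such pairs; every other pair glues to an \<open>x\<close>-\<open>y\<close> embedding of the \<open>(a @ b)\<close>-path, and
  distinct midpoints give distinct embeddings. Summing over the at least \<open>|U| / (t_x t_y)\<close>
  midpoints sharing the most popular type pair gives the bound.\<close>

lemma rooted_graphD: "rooted_graph r H \<Longrightarrow> hw1 H \<le> r \<and> hw2 H \<le> r \<and> hw1 H \<noteq> hw2 H"
  by (simp add: rooted_graph_def)

lemma path_order_pos:
  assumes "\<forall>H\<in>set Hs. rooted_graph r H" and "Hs \<noteq> []"
  shows "1 \<le> length Hs * r"
proof -
  have "Hs!0 \<in> set Hs" using assms(2) by simp
  then have "1 \<le> r" using rooted_graphD assms(1) by fastforce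
  then show ?thesis using assms(2) by (cases Hs) auto
qed

lemma path_embeddingsD:
  assumes "g \<in> path_embeddings r Hs V E x y"
  shows "\<forall>i v. (length Hs \<le> i \<or> r < v) \<longrightarrow> g i v = 0"
    "\<forall>i<length Hs. \<forall>v\<le>r. g i v \<in> V"
    "\<forall>i<length Hs. \<forall>u\<le>r. \<forall>v\<le>r. hE (Hs!i) u v \<longrightarrow> E (g i u) (g i v)"
    "\<forall>i. Suc i < length Hs \<longrightarrow> g i (hw2 (Hs!i)) = g (Suc i) (hw1 (Hs!Suc i))"
    "\<forall>i<length Hs. \<forall>j<length Hs. \<forall>u\<le>r. \<forall>v\<le>r. g i u = g j v \<longrightarrow>
         (i = j \<and> u = v) \<or>
         (j = Suc i \<and> u = hw2 (Hs!i) \<and> v = hw1 (Hs!j)) \<or>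
         (i = Suc j \<and> v = hw2 (Hs!j) \<and> u = hw1 (Hs!i))"
    "g 0 (hw1 (Hs!0)) = x"
    "g (length Hs - 1) (hw2 (Hs!(length Hs - 1))) = y"
  using assms by (simp_all add: path_embeddings_def)

text \<open>Vertex \<open>u\<close> of the \<open>i\<close>-th copy is the pair \<open>(i, u)\<close>; the first distinguished vertex of
  copy \<open>i > 0\<close> is represented by the second distinguished vertex of copy \<open>i - 1\<close>.\<close>

definition path_vertices :: "nat \<Rightarrow> rgraph list \<Rightarrow> (nat \<times> nat) set" where
  "path_vertices r Hs = {(i, u). i < length Hs \<and> u \<le> r \<and> \<not> (0 < i \<and> u = hw1 (Hs!i))}"

definition vertex_rep :: "rgraph list \<Rightarrow> nat \<times> nat \<Rightarrow> nat \<times> nat" where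
  "vertex_rep Hs p =
     (if 0 < fst p \<and> snd p = hw1 (Hs!fst p) then (fst p - 1, hw2 (Hs!(fst p - 1))) else p)"

lemma finite_path_vertices: "finite (path_vertices r Hs)"
proof -
  have "path_vertices r Hs \<subseteq> {..<length Hs} \<times> {..r}" by (auto simp: path_vertices_def)
  then show ?thesis by (rule finite_subset) auto
qed

lemma card_path_vertices_le:
  assumes rooted: "\<forall>H\<in>set Hs. rooted_graph r H" and ne: "Hs \<noteq> []"
  shows "card (path_vertices r Hs) \<le> length Hs * r + 1"
proof -
  let ?t = "length Hs"
  let ?W = "\<Union>i\<in>{1..<?t}. {i} \<times> ({..r} - {hw1 (Hs!i)})"
  have "path_vertices r Hs \<subseteq> ({0} \<times> {..r}) \<union> ?W"
    by (auto simp: path_vertices_def)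
  then have "card (path_vertices r Hs) \<le> card (({0::nat} \<times> {..r}) \<union> ?W)"
    by (rule card_mono[rotated]) auto
  also have "\<dots> \<le> card ({0::nat} \<times> {..r}) + card ?W"
    by (rule card_Un_le)
  also have "card ?W \<le> (\<Sum>i\<in>{1..<?t}. card ({i} \<times> ({..r} - {hw1 (Hs!i)})))"
    by (rule card_UN_le) auto
  also have "\<dots> = (\<Sum>i\<in>{1..<?t}. r)"
  proof (rule sum.cong)
    fix i assume "i \<in> {1..<?t}"
    then have "Hs!i \<in> set Hs" by simp
    then have "hw1 (Hs!i) \<le> r" using rooted rooted_graphD by blast
    then show "card ({i} \<times> ({..r} - {hw1 (Hs!i)})) = r"
      by (simp add: card_cartesian_product)
  qed simp
  finally have "card (path_vertices r Hs) \<le> r + 1 + (?t - 1) * r"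
    by (simp add: card_cartesian_product)
  moreover have "r + (?t - 1) * r = ?t * r" using ne by (cases ?t) auto
  ultimately show ?thesis by simp
qed

lemma vertex_rep_in_path_vertices:
  assumes rooted: "\<forall>H\<in>set Hs. rooted_graph r H" and "j < length Hs" "v \<le> r"
  shows "vertex_rep Hs (j, v) \<in> path_vertices r Hs"
proof (cases "0 < j \<and> v = hw1 (Hs!j)")
  case True
  have "Hs!(j-1) \<in> set Hs" using assms(2) by simp
  then have "hw2 (Hs!(j-1)) \<le> r \<and> hw1 (Hs!(j-1)) \<noteq> hw2 (Hs!(j-1))"
    using rooted rooted_graphD by blast
  then show ?thesis using True assms by (auto simp: vertex_rep_def path_vertices_def)
qed (use assms in \<open>auto simp: vertex_rep_def path_vertices_def\<close>)

lemma path_embedding_at_vertex_rep: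
  assumes "g \<in> path_embeddings r Hs V E x y" "j < length Hs"
  shows "case_prod g (vertex_rep Hs (j, v)) = g j v"
proof (cases "0 < j \<and> v = hw1 (Hs!j)")
  case True
  then have "Suc (j-1) < length Hs" using assms by simp
  then have "g (j-1) (hw2 (Hs!(j-1))) = g (Suc (j-1)) (hw1 (Hs!Suc (j-1)))"
    using path_embeddingsD(4)[OF assms(1)] by blast
  then show ?thesis using True by (simp add: vertex_rep_def)
qed (auto simp: vertex_rep_def)

lemma path_embedding_eqI:
  assumes rooted: "\<forall>H\<in>set Hs. rooted_graph r H"
    and g1: "g1 \<in> path_embeddings r Hs V E x y" and g2: "g2 \<in> path_embeddings r Hs V E x y"
    and agree: "\<forall>p\<in>path_vertices r Hs. case_prod g1 p = case_prod g2 p"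
  shows "g1 = g2"
proof (intro ext)
  fix i v
  show "g1 i v = g2 i v"
  proof (cases "i < length Hs \<and> v \<le> r")
    case True
    then have "vertex_rep Hs (i, v) \<in> path_vertices r Hs"
      using vertex_rep_in_path_vertices rooted by blast
    then show ?thesis
      using agree path_embedding_at_vertex_rep[OF g1, of i v]
        path_embedding_at_vertex_rep[OF g2, of i v] True by metis
  next
    case False
    then show ?thesis using path_embeddingsD(1)[OF g1] path_embeddingsD(1)[OF g2] by auto
  qed
qed

lemma card_agreeing_embeddings_le:
  assumes rooted: "\<forall>H\<in>set Hs. rooted_graph r H" and fin: "finite V"
    and X: "X \<subseteq> path_embeddings r Hs V E x y" and S: "S \<subseteq> path_vertices r Hs"
    and agree: "\<forall>g1\<in>X. \<forall>g2\<in>X. \<forall>p\<in>S. case_prod g1 p = case_prod g2 p"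
  shows "finite X \<and> card X \<le> card V ^ (card (path_vertices r Hs) - card S)"
proof -
  define D where "D = path_vertices r Hs - S"
  define free_part where "free_part g = restrict (case_prod g) D" for g :: "nat \<Rightarrow> nat \<Rightarrow> nat"
  have fD: "finite D" using finite_path_vertices D_def by auto
  have img: "free_part ` X \<subseteq> PiE D (\<lambda>_. V)"
  proof
    fix h assume "h \<in> free_part ` X"
    then obtain g where g: "g \<in> X" "h = free_part g" by auto
    then have "case_prod g p \<in> V" if "p \<in> D" for p
      using path_embeddingsD(2) X that by (auto simp: D_def path_vertices_def)
    then show "h \<in> PiE D (\<lambda>_. V)" using g by (auto simp: free_part_def)
  qed
  have "inj_on free_part X"
  proof
    fix g1 g2 assume g1: "g1 \<in> X" and g2: "g2 \<in> X" and eq: "free_part g1 = free_part g2"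
    have "case_prod g1 p = case_prod g2 p" if "p \<in> path_vertices r Hs" for p
    proof (cases "p \<in> S")
      case False
      then have "p \<in> D" using that D_def by auto
      then show ?thesis using fun_cong[OF eq, of p] by (simp add: free_part_def)
    qed (use agree g1 g2 in blast)
    then show "g1 = g2" using path_embedding_eqI[OF rooted] g1 g2 X by blast
  qed
  moreover have fP: "finite (PiE D (\<lambda>_. V))" using fD fin by (simp add: finite_PiE)
  ultimately have "finite X" "card X \<le> card (PiE D (\<lambda>_. V))"
    using finite_imageD[OF finite_subset[OF img fP]] card_inj_on_le[OF _ img fP] by auto
  moreover have "card (PiE D (\<lambda>_. V)) = card V ^ (card (path_vertices r Hs) - card S)"
    using fD S finite_path_vertices
    by (simp add: card_PiE D_def card_Diff_subset finite_subset)
  ultimately show ?thesis by simp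
qed

lemma card_agreeing_embeddings_bound:
  assumes rooted: "\<forall>H\<in>set Hs. rooted_graph r H" and ne: "Hs \<noteq> []"
    and fin: "finite V" and Vne: "V \<noteq> {}"
    and X: "X \<subseteq> path_embeddings r Hs V E x y" and S: "S \<subseteq> path_vertices r Hs" and S1: "1 \<le> card S"
    and agree: "\<forall>g1\<in>X. \<forall>g2\<in>X. \<forall>p\<in>S. case_prod g1 p = case_prod g2 p"
  shows "finite X \<and> real (card X) * real (card V) ^ (card S - 1) \<le> real (card V) ^ (length Hs * r)"
proof -
  note bound = card_agreeing_embeddings_le[OF rooted fin X S agree]
  let ?n = "real (card V)"
  have n1: "1 \<le> ?n" using fin Vne by (simp add: Suc_leI card_gt_0_iff)
  have "card S \<le> card (path_vertices r Hs)" using S finite_path_vertices by (simp add: card_mono)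
  have "real (card X) * ?n ^ (card S - 1)
      \<le> ?n ^ (card (path_vertices r Hs) - card S) * ?n ^ (card S - 1)"
    using bound by (intro mult_right_mono) (auto simp flip: of_nat_power)
  also have "\<dots> = ?n ^ (card (path_vertices r Hs) - 1)"
    using \<open>card S \<le> card (path_vertices r Hs)\<close> S1 by (simp flip: power_add)
  also have "\<dots> \<le> ?n ^ (length Hs * r)"
    using card_path_vertices_le[OF rooted ne] n1 by (intro power_increasing) auto
  finally show ?thesis using bound by simp
qed

definition path_start :: "rgraph list \<Rightarrow> nat \<times> nat" where
  "path_start Hs = (0, hw1 (Hs!0))"

definition path_end :: "rgraph list \<Rightarrow> nat \<times> nat" where
  "path_end Hs = (length Hs - 1, hw2 (Hs!(length Hs - 1)))"

lemma path_start_end_in_path_vertices: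
  assumes "Hs \<noteq> []" "\<forall>H\<in>set Hs. rooted_graph r H"
  shows "path_start Hs \<in> path_vertices r Hs" "path_end Hs \<in> path_vertices r Hs"
  using rooted_graphD[of r "Hs!0"] rooted_graphD[of r "Hs!(length Hs - 1)"] assms
  by (auto simp: path_start_def path_end_def path_vertices_def)

lemma path_start_neq_end:
  "Hs \<noteq> [] \<Longrightarrow> \<forall>H\<in>set Hs. rooted_graph r H \<Longrightarrow> path_start Hs \<noteq> path_end Hs"
  using rooted_graphD[of r "Hs!0"] by (auto simp: path_start_def path_end_def)

lemma path_embedding_at_start_end:
  assumes "g \<in> path_embeddings r Hs V E x y"
  shows "case_prod g (path_start Hs) = x" "case_prod g (path_end Hs) = y"
  using path_embeddingsD(6,7)[OF assms] by (simp_all add: path_start_def path_end_def)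

lemma card_path_embeddings_bound:
  assumes rooted: "\<forall>H\<in>set Hs. rooted_graph r H" and ne: "Hs \<noteq> []"
    and fin: "finite V" and Vne: "V \<noteq> {}"
  shows "finite (path_embeddings r Hs V E x y) \<and>
    real (card (path_embeddings r Hs V E x y)) * real (card V) \<le> real (card V) ^ (length Hs * r)"
proof -
  let ?S = "{path_start Hs, path_end Hs}"
  have "card ?S = 2" using path_start_neq_end[OF ne rooted] by simp
  moreover have "finite (path_embeddings r Hs V E x y) \<and>
    real (card (path_embeddings r Hs V E x y)) * real (card V) ^ (card ?S - 1)
      \<le> real (card V) ^ (length Hs * r)"
  proof (rule card_agreeing_embeddings_bound[OF rooted ne fin Vne order.refl])
    show "?S \<subseteq> path_vertices r Hs" using path_start_end_in_path_vertices[OF ne rooted] by simp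
    show "\<forall>g1\<in>path_embeddings r Hs V E x y. \<forall>g2\<in>path_embeddings r Hs V E x y. \<forall>p\<in>?S.
        case_prod g1 p = case_prod g2 p"
      using path_embedding_at_start_end by (simp only: ball_simps insert_iff) metis
  qed (use \<open>card ?S = 2\<close> in simp)
  ultimately show ?thesis by simp
qed

lemma card_path_embeddings_through_bound:
  assumes rooted: "\<forall>H\<in>set Hs. rooted_graph r H" and ne: "Hs \<noteq> []"
    and fin: "finite V" and Vne: "V \<noteq> {}"
    and j: "j < length Hs" and v: "v \<le> r" and "w \<noteq> x" "w \<noteq> y"
  shows "finite {g\<in>path_embeddings r Hs V E x y. g j v = w} \<and>
    real (card {g\<in>path_embeddings r Hs V E x y. g j v = w}) * real (card V) ^ 2
      \<le> real (card V) ^ (length Hs * r)"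
proof (cases "vertex_rep Hs (j, v) \<in> {path_start Hs, path_end Hs}")
  case True
  have "g j v \<noteq> w" if g: "g \<in> path_embeddings r Hs V E x y" for g
  proof
    assume "g j v = w"
    then have "case_prod g (vertex_rep Hs (j, v)) = w"
      using path_embedding_at_vertex_rep[OF g j] by simp
    then show False using True path_embedding_at_start_end[OF g] assms(7,8) by auto
  qed
  then have "{g\<in>path_embeddings r Hs V E x y. g j v = w} = {}" by blast
  then show ?thesis by (simp only: card.empty finite.emptyI) simp
next
  case False
  let ?S = "{path_start Hs, path_end Hs, vertex_rep Hs (j, v)}"
  have "card ?S = 3" using path_start_neq_end[OF ne rooted] False by auto
  moreover have "finite {g\<in>path_embeddings r Hs V E x y. g j v = w} \<and>
    real (card {g\<in>path_embeddings r Hs V E x y. g j v = w}) * real (card V) ^ (card ?S - 1)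
      \<le> real (card V) ^ (length Hs * r)"
  proof (rule card_agreeing_embeddings_bound[OF rooted ne fin Vne])
    show "?S \<subseteq> path_vertices r Hs"
      using path_start_end_in_path_vertices[OF ne rooted] vertex_rep_in_path_vertices[OF rooted j v]
      by simp
    have "case_prod g1 p = case_prod g2 p"
      if "g1 \<in> path_embeddings r Hs V E x y" "g2 \<in> path_embeddings r Hs V E x y"
        "g1 j v = w" "g2 j v = w" "p \<in> ?S" for g1 g2 p
      using that path_embedding_at_start_end[OF that(1)] path_embedding_at_start_end[OF that(2)]
        path_embedding_at_vertex_rep[OF that(1) j, of v] path_embedding_at_vertex_rep[OF that(2) j, of v]
      by auto
    then show "\<forall>g1\<in>{g\<in>path_embeddings r Hs V E x y. g j v = w}.
        \<forall>g2\<in>{g\<in>path_embeddings r Hs V E x y. g j v = w}. \<forall>p\<in>?S. case_prod g1 p = case_prod g2 p"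
      by blast
  qed (use \<open>card ?S = 3\<close> in auto)
  ultimately show ?thesis by simp
qed

lemma path_embedding_last_vertex_unique:
  assumes f: "f \<in> path_embeddings r a V E x z" and rooted: "\<forall>H\<in>set a. rooted_graph r H"
    and ne: "a \<noteq> []" and i: "i < length a" and u: "u \<le> r" and eq: "f i u = z"
  shows "i = length a - 1 \<and> u = hw2 (a!(length a - 1))"
proof -
  let ?l = "length a - 1"
  have R: "hw2 (a!?l) \<le> r \<and> hw1 (a!?l) \<noteq> hw2 (a!?l)"
    using rooted_graphD[of r "a!?l"] rooted ne by auto
  have "f i u = f ?l (hw2 (a!?l))" using eq path_embeddingsD(7)[OF f] by simp
  then have "(i = ?l \<and> u = hw2 (a!?l)) \<or> (?l = Suc i \<and> u = hw2 (a!i) \<and> hw2 (a!?l) = hw1 (a!?l)) \<or>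
         (i = Suc ?l \<and> u = hw1 (a!i))"
    using path_embeddingsD(5)[OF f] i u R ne by (meson diff_less length_greater_0_conv zero_less_one)
  then show ?thesis using R i by auto
qed

lemma path_embedding_first_vertex_unique:
  assumes g: "g \<in> path_embeddings r b V E z y" and rooted: "\<forall>H\<in>set b. rooted_graph r H"
    and ne: "b \<noteq> []" and j: "j < length b" and v: "v \<le> r" and eq: "g j v = z"
  shows "j = 0 \<and> v = hw1 (b!0)"
proof -
  have R: "hw1 (b!0) \<le> r \<and> hw1 (b!0) \<noteq> hw2 (b!0)" using rooted_graphD[of r "b!0"] rooted ne by auto
  have "g j v = g 0 (hw1 (b!0))" using eq path_embeddingsD(6)[OF g] by simp
  then have "(j = 0 \<and> v = hw1 (b!0)) \<or> (j = Suc 0 \<and> hw1 (b!0) = hw2 (b!0))"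
    using path_embeddingsD(5)[OF g] j v R ne by blast
  then show ?thesis using R by auto
qed

lemma path_embedding_ends_distinct:
  assumes f: "f \<in> path_embeddings r a V E x z" and rooted: "\<forall>H\<in>set a. rooted_graph r H"
    and ne: "a \<noteq> []"
  shows "x \<noteq> z"
proof
  assume "x = z"
  then have "f 0 (hw1 (a!0)) = z" using path_embeddingsD(6)[OF f] by simp
  moreover have "hw1 (a!0) \<le> r \<and> hw1 (a!0) \<noteq> hw2 (a!0)"
    using rooted_graphD[of r "a!0"] rooted ne by auto
  ultimately have "0 = length a - 1 \<and> hw1 (a!0) = hw2 (a!(length a - 1))"
    using path_embedding_last_vertex_unique[OF f rooted ne, of 0] ne by blast
  with \<open>hw1 (a!0) \<le> r \<and> hw1 (a!0) \<noteq> hw2 (a!0)\<close> show False by (metis)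
qed

definition path_concat ::
  "nat \<Rightarrow> (nat \<Rightarrow> nat \<Rightarrow> nat) \<Rightarrow> (nat \<Rightarrow> nat \<Rightarrow> nat) \<Rightarrow> nat \<Rightarrow> nat \<Rightarrow> nat" where
  "path_concat l f g = (\<lambda>i v. if i < l then f i v else g (i - l) v)"

definition compatible_pairs ::
  "nat \<Rightarrow> rgraph list \<Rightarrow> rgraph list \<Rightarrow> nat set \<Rightarrow> (nat \<Rightarrow> nat \<Rightarrow> bool) \<Rightarrow> nat \<Rightarrow> nat \<Rightarrow> nat \<Rightarrow>
     ((nat \<Rightarrow> nat \<Rightarrow> nat) \<times> (nat \<Rightarrow> nat \<Rightarrow> nat)) set" where
  "compatible_pairs r a b V E x z y =
     {p \<in> path_embeddings r a V E x z \<times> path_embeddings r b V E z y.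
       \<forall>i<length a. \<forall>u\<le>r. \<forall>j<length b. \<forall>v\<le>r. fst p i u = snd p j v \<longrightarrow> fst p i u = z}"

lemma compatible_pair_meets_at_joint:
  assumes fg: "(f, g) \<in> compatible_pairs r a b V E x z y"
    and ra: "\<forall>H\<in>set a. rooted_graph r H" and rb: "\<forall>H\<in>set b. rooted_graph r H"
    and na: "a \<noteq> []" and nb: "b \<noteq> []"
    and i: "i < length a" and u: "u \<le> r" and j: "j < length b" and v: "v \<le> r"
    and eq: "f i u = g j v"
  shows "i = length a - 1 \<and> u = hw2 (a!(length a - 1)) \<and> j = 0 \<and> v = hw1 (b!0)"
proof -
  have f: "f \<in> path_embeddings r a V E x z" and g: "g \<in> path_embeddings r b V E z y"
    and "f i u = z"
    using fg i u j v eq by (auto simp: compatible_pairs_def)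
  then show ?thesis
    using path_embedding_last_vertex_unique[OF f ra na i u]
      path_embedding_first_vertex_unique[OF g rb nb j v] eq
    by simp
qed

lemma path_concat_vertices_eq_cases:
  assumes fg: "(f, g) \<in> compatible_pairs r a b V E x z y"
    and ra: "\<forall>H\<in>set a. rooted_graph r H" and rb: "\<forall>H\<in>set b. rooted_graph r H"
    and na: "a \<noteq> []" and nb: "b \<noteq> []"
    and i: "i < length (a @ b)" and j: "j < length (a @ b)" and u: "u \<le> r" and v: "v \<le> r"
    and eq: "path_concat (length a) f g i u = path_concat (length a) f g j v"
  shows "(i = j \<and> u = v) \<or>
    (j = Suc i \<and> u = hw2 ((a @ b)!i) \<and> v = hw1 ((a @ b)!j)) \<or>
    (i = Suc j \<and> v = hw2 ((a @ b)!j) \<and> u = hw1 ((a @ b)!i))"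
proof -
  let ?la = "length a" and ?lb = "length b"
  have f: "f \<in> path_embeddings r a V E x z" and g: "g \<in> path_embeddings r b V E z y"
    using fg by (auto simp: compatible_pairs_def)
  have nth2: "(a @ b)!k = b!(k - ?la)" if "\<not> k < ?la" for k using that by (simp add: nth_append)
  have cross: "l = Suc k \<and> w = hw2 ((a @ b)!k) \<and> w' = hw1 ((a @ b)!l)"
    if "k < ?la" "\<not> l < ?la" "l < length (a @ b)" "w \<le> r" "w' \<le> r" "f k w = g (l - ?la) w'"
    for k l w w'
  proof -
    have "l - ?la < ?lb" using that(2,3) by simp
    then have "k = ?la - 1 \<and> w = hw2 (a!(?la - 1)) \<and> l - ?la = 0 \<and> w' = hw1 (b!0)"
      using compatible_pair_meets_at_joint[OF fg ra rb na nb that(1,4) _ that(5,6)] by blast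
    then show ?thesis using that na by (simp add: nth_append)
  qed
  consider "i < ?la" "j < ?la" | "i < ?la" "\<not> j < ?la" | "\<not> i < ?la" "j < ?la"
    | "\<not> i < ?la" "\<not> j < ?la" by blast
  then show ?thesis
  proof cases
    case 1
    then have "f i u = f j v" using eq by (simp add: path_concat_def)
    then have "(i = j \<and> u = v) \<or> (j = Suc i \<and> u = hw2 (a!i) \<and> v = hw1 (a!j)) \<or>
        (i = Suc j \<and> v = hw2 (a!j) \<and> u = hw1 (a!i))"
      using path_embeddingsD(5)[OF f] 1 u v by blast
    then show ?thesis using 1 by (simp add: nth_append)
  next
    case 2 then show ?thesis using cross[of i j u v] j u v eq by (simp add: path_concat_def)
  next
    case 3 then show ?thesis using cross[of j i v u] i u v eq by (simp add: path_concat_def)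
  next
    case 4
    have "i - ?la < ?lb" "j - ?la < ?lb" using i j 4 by simp_all
    moreover have "g (i - ?la) u = g (j - ?la) v" using eq 4 by (simp add: path_concat_def)
    ultimately have "(i - ?la = j - ?la \<and> u = v) \<or>
        (j - ?la = Suc (i - ?la) \<and> u = hw2 (b!(i - ?la)) \<and> v = hw1 (b!(j - ?la))) \<or>
        (i - ?la = Suc (j - ?la) \<and> v = hw2 (b!(j - ?la)) \<and> u = hw1 (b!(i - ?la)))"
      using path_embeddingsD(5)[OF g] u v by blast
    then show ?thesis using nth2[OF 4(1)] nth2[OF 4(2)] 4 by auto
  qed
qed

lemma path_concat_in_path_embeddings:
  assumes fg: "(f, g) \<in> compatible_pairs r a b V E x z y"
    and ra: "\<forall>H\<in>set a. rooted_graph r H" and rb: "\<forall>H\<in>set b. rooted_graph r H"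
    and na: "a \<noteq> []" and nb: "b \<noteq> []"
  shows "path_concat (length a) f g \<in> path_embeddings r (a @ b) V E x y"
proof -
  let ?la = "length a" and ?lb = "length b" and ?h = "path_concat (length a) f g"
  have f: "f \<in> path_embeddings r a V E x z" and g: "g \<in> path_embeddings r b V E z y"
    using fg by (auto simp: compatible_pairs_def)
  note F = path_embeddingsD[OF f] and G = path_embeddingsD[OF g]
  have nth1: "(a @ b)!i = a!i" if "i < ?la" for i using that by (simp add: nth_append)
  have nth2: "(a @ b)!i = b!(i - ?la)" if "\<not> i < ?la" for i using that by (simp add: nth_append)
  have h1: "?h i v = f i v" if "i < ?la" for i v using that by (simp add: path_concat_def)
  have h2: "?h i v = g (i - ?la) v" if "\<not> i < ?la" for i v using that by (simp add: path_concat_def)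
  have P1: "\<forall>i v. (length (a @ b) \<le> i \<or> r < v) \<longrightarrow> ?h i v = 0"
  proof (intro allI impI)
    fix i v assume "length (a @ b) \<le> i \<or> r < v"
    then show "?h i v = 0" using F(1) G(1) h1 h2 by (cases "i < ?la") auto
  qed
  have P2: "\<forall>i<length (a @ b). \<forall>v\<le>r. ?h i v \<in> V"
  proof (intro allI impI)
    fix i v assume "i < length (a @ b)" "v \<le> r"
    then show "?h i v \<in> V" using F(2) G(2) h1 h2 by (cases "i < ?la") auto
  qed
  have P3: "\<forall>i<length (a @ b). \<forall>u\<le>r. \<forall>v\<le>r. hE ((a @ b)!i) u v \<longrightarrow> E (?h i u) (?h i v)"
  proof (intro allI impI)
    fix i u v assume "i < length (a @ b)" "u \<le> r" "v \<le> r" "hE ((a @ b)!i) u v"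
    then show "E (?h i u) (?h i v)" using F(3) G(3) h1 h2 nth1 nth2 by (cases "i < ?la") auto
  qed
  have P4: "\<forall>i. Suc i < length (a @ b) \<longrightarrow> ?h i (hw2 ((a @ b)!i)) = ?h (Suc i) (hw1 ((a @ b)!Suc i))"
  proof (intro allI impI)
    fix i assume i: "Suc i < length (a @ b)"
    consider "Suc i < ?la" | "Suc i = ?la" | "?la \<le> i" by linarith
    then show "?h i (hw2 ((a @ b)!i)) = ?h (Suc i) (hw1 ((a @ b)!Suc i))"
    proof cases
      case 1 then show ?thesis using F(4) h1 nth1 by simp
    next
      case 2
      then have "i = ?la - 1" by simp
      then show ?thesis using 2 F(7) G(6) h1 h2 nth1 nth2 by simp
    next
      case 3
      then have "Suc (i - ?la) < ?lb" "Suc i - ?la = Suc (i - ?la)" using i by auto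
      then show ?thesis using 3 G(4) h2 nth2 by simp
    qed
  qed
  have P6: "?h 0 (hw1 ((a @ b)!0)) = x" using F(6) na h1 nth1 by simp
  have "\<not> length (a @ b) - 1 < ?la" "length (a @ b) - 1 - ?la = ?lb - 1" using nb by (cases b; simp)+
  then have P7: "?h (length (a @ b) - 1) (hw2 ((a @ b)!(length (a @ b) - 1))) = y"
    using G(7) h2 nth2 by simp
  show ?thesis unfolding path_embeddings_def
    using P1 P2 P3 P4 path_concat_vertices_eq_cases[OF fg ra rb na nb] P6 P7 by blast
qed

lemma inj_on_path_concat:
  assumes "\<And>p i v. p \<in> T \<Longrightarrow> length a \<le> i \<Longrightarrow> fst p i v = 0"
  shows "inj_on (\<lambda>p. path_concat (length a) (fst p) (snd p)) T"
proof
  fix p q assume p: "p \<in> T" and q: "q \<in> T"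
    and eq: "path_concat (length a) (fst p) (snd p) = path_concat (length a) (fst q) (snd q)"
  have "fst p i v = fst q i v" for i v
  proof (cases "i < length a")
    case True
    then show ?thesis using fun_cong[OF fun_cong[OF eq, of i], of v] by (simp add: path_concat_def)
  qed (simp add: assms p q)
  moreover have "snd p j v = snd q j v" for j v
    using fun_cong[OF fun_cong[OF eq, of "j + length a"], of v] by (simp add: path_concat_def)
  ultimately show "p = q" by (simp add: prod_eq_iff ext)
qed

lemma card_UN_compatible_pairs_le:
  assumes ra: "\<forall>H\<in>set a. rooted_graph r H" and rb: "\<forall>H\<in>set b. rooted_graph r H"
    and na: "a \<noteq> []" and nb: "b \<noteq> []" and fin: "finite V" and Vne: "V \<noteq> {}"
  shows "card (\<Union>z\<in>U. compatible_pairs r a b V E x z y) \<le> card (path_embeddings r (a @ b) V E x y)"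
proof (rule card_inj_on_le)
  let ?T = "\<Union>z\<in>U. compatible_pairs r a b V E x z y"
  show "inj_on (\<lambda>p. path_concat (length a) (fst p) (snd p)) ?T"
  proof (rule inj_on_path_concat)
    fix p i v assume "p \<in> ?T" "length a \<le> i"
    then show "fst p i v = 0"
      using path_embeddingsD(1) by (fastforce simp: compatible_pairs_def)
  qed
  show "(\<lambda>p. path_concat (length a) (fst p) (snd p)) ` ?T \<subseteq> path_embeddings r (a @ b) V E x y"
    using path_concat_in_path_embeddings[OF _ ra rb na nb] by fastforce
  have "\<forall>H\<in>set (a @ b). rooted_graph r H" using ra rb by auto
  then show "finite (path_embeddings r (a @ b) V E x y)"
    using card_path_embeddings_bound[OF _ _ fin Vne] na by blast
qed

lemma card_pairs_colliding_at_le: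
  fixes E :: "nat \<Rightarrow> nat \<Rightarrow> bool"
  assumes ra: "\<forall>H\<in>set a. rooted_graph r H" and rb: "\<forall>H\<in>set b. rooted_graph r H"
    and na: "a \<noteq> []" and nb: "b \<noteq> []" and fin: "finite V" and Vne: "V \<noteq> {}"
    and xy: "x \<noteq> y" and zy: "z \<noteq> y"
    and i: "i < length a" and u: "u \<le> r" and j: "j < length b" and v: "v \<le> r"
  defines "C \<equiv> {p \<in> path_embeddings r a V E x z \<times> path_embeddings r b V E z y.
      fst p i u = snd p j v \<and> fst p i u \<noteq> z}"
  shows "finite C \<and> real (card C) * real (card V) ^ 3
    \<le> 2 * (real (card V) ^ (length a * r) * real (card V) ^ (length b * r))"
proof -
  let ?A = "path_embeddings r a V E x z" and ?B = "path_embeddings r b V E z y"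
  let ?n = "real (card V)" let ?N = "?n ^ (length a * r)" and ?M = "?n ^ (length b * r)"
  define A1 where "A1 = {f \<in> ?A. f i u \<noteq> z \<and> f i u \<noteq> y}"
  define C1 where "C1 = Sigma A1 (\<lambda>f. {g \<in> ?B. g j v = f i u})"
  define C2 where "C2 = {f \<in> ?A. f i u = y} \<times> ?B"
  have n1: "1 \<le> ?n" using fin Vne by (simp add: Suc_leI card_gt_0_iff)
  note bA = card_path_embeddings_bound[OF ra na fin Vne, of E x z]
    and bB = card_path_embeddings_bound[OF rb nb fin Vne, of E z y]
  have fA1: "finite A1" using bA A1_def by auto
  have fibre: "finite {g \<in> ?B. g j v = f i u} \<and> real (card {g \<in> ?B. g j v = f i u}) * ?n ^ 2 \<le> ?M"
    if "f \<in> A1" for f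
    using card_path_embeddings_through_bound[OF rb nb fin Vne j v] that A1_def by auto
  have fC1: "finite C1" using fA1 fibre C1_def by auto
  have "card C1 = (\<Sum>f\<in>A1. card {g \<in> ?B. g j v = f i u})"
    unfolding C1_def using fA1 fibre by (simp add: card_SigmaI)
  then have "real (card C1) * ?n ^ 2 = (\<Sum>f\<in>A1. real (card {g \<in> ?B. g j v = f i u}) * ?n ^ 2)"
    by (simp add: sum_distrib_right)
  also have "\<dots> \<le> (\<Sum>f\<in>A1. ?M)" by (rule sum_mono) (use fibre in auto)
  also have "\<dots> \<le> real (card ?A) * ?M"
    using bA A1_def by (simp, intro mult_right_mono) (auto intro: card_mono)
  finally have "real (card C1) * ?n ^ 2 * ?n \<le> (real (card ?A) * ?M) * ?n"
    using n1 by (intro mult_right_mono) auto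
  also have "\<dots> = (real (card ?A) * ?n) * ?M" by simp
  also have "\<dots> \<le> ?N * ?M" using bA by (intro mult_right_mono) auto
  finally have C1_bound: "real (card C1) * ?n ^ 3 \<le> ?N * ?M"
    by (simp add: power_numeral_reduce mult_ac)
  have bA_through: "finite {f \<in> ?A. f i u = y} \<and> real (card {f \<in> ?A. f i u = y}) * ?n ^ 2 \<le> ?N"
    using card_path_embeddings_through_bound[OF ra na fin Vne i u] xy zy by auto
  have fC2: "finite C2" using bA_through bB C2_def by auto
  have "real (card C2) * ?n ^ 3 = (real (card {f \<in> ?A. f i u = y}) * ?n ^ 2) * (real (card ?B) * ?n)"
    unfolding C2_def by (simp add: card_cartesian_product power_numeral_reduce)
  also have "\<dots> \<le> ?N * ?M" using bA_through bB by (intro mult_mono) auto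
  finally have C2_bound: "real (card C2) * ?n ^ 3 \<le> ?N * ?M" .
  have sub: "C \<subseteq> C1 \<union> C2" unfolding C_def C1_def C2_def A1_def by auto
  have "card C \<le> card C1 + card C2"
    using card_mono[OF _ sub] card_Un_le[of C1 C2] fC1 fC2 by fastforce
  then have "real (card C) * ?n ^ 3 \<le> real (card C1) * ?n ^ 3 + real (card C2) * ?n ^ 3"
    by (simp flip: distrib_right of_nat_add) (use n1 in auto)
  also have "\<dots> \<le> 2 * (?N * ?M)" using C1_bound C2_bound by simp
  finally show ?thesis using finite_subset[OF sub] fC1 fC2 by simp
qed

lemma card_colliding_pairs_le:
  fixes E :: "nat \<Rightarrow> nat \<Rightarrow> bool"
  assumes ra: "\<forall>H\<in>set a. rooted_graph r H" and rb: "\<forall>H\<in>set b. rooted_graph r H"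
    and na: "a \<noteq> []" and nb: "b \<noteq> []" and fin: "finite V" and Vne: "V \<noteq> {}"
    and xy: "x \<noteq> y" and zy: "z \<noteq> y"
  defines "P \<equiv> path_embeddings r a V E x z \<times> path_embeddings r b V E z y"
  shows "real (card (P - compatible_pairs r a b V E x z y)) * real (card V) ^ 3
    \<le> 2 * real (length a * (r + 1) * (length b * (r + 1)))
        * (real (card V) ^ (length a * r) * real (card V) ^ (length b * r))"
proof -
  let ?n = "real (card V)" let ?NM = "?n ^ (length a * r) * ?n ^ (length b * r)"
  define I where "I = {..<length a} \<times> {..r} \<times> {..<length b} \<times> {..r}"
  define C where "C q = {p \<in> P. fst p (fst q) (fst (snd q)) = snd p (fst (snd (snd q))) (snd (snd (snd q)))
     \<and> fst p (fst q) (fst (snd q)) \<noteq> z}" for q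
  have bound_C: "finite (C q) \<and> real (card (C q)) * ?n ^ 3 \<le> 2 * ?NM" if "q \<in> I" for q
  proof -
    obtain i u j v where q: "q = (i, u, j, v)" by (cases q) auto
    then have "i < length a" "u \<le> r" "j < length b" "v \<le> r" using that by (auto simp: I_def)
    then show ?thesis unfolding q C_def P_def
      using card_pairs_colliding_at_le[OF ra rb na nb fin Vne xy zy] by simp
  qed
  have "P - compatible_pairs r a b V E x z y \<subseteq> (\<Union>q\<in>I. C q)"
  proof
    fix p assume p: "p \<in> P - compatible_pairs r a b V E x z y"
    then obtain i u j v where "i < length a" "u \<le> r" "j < length b" "v \<le> r"
      "fst p i u = snd p j v" "fst p i u \<noteq> z"
      unfolding compatible_pairs_def P_def by blast
    then show "p \<in> (\<Union>q\<in>I. C q)"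
      using p unfolding I_def C_def by (intro UN_I[of "(i, u, j, v)"]) auto
  qed
  moreover have "finite I" by (simp add: I_def)
  ultimately have "card (P - compatible_pairs r a b V E x z y) \<le> (\<Sum>q\<in>I. card (C q))"
    using bound_C card_UN_le[of I C] by (meson card_mono finite_UN_I order_trans)
  then have "real (card (P - compatible_pairs r a b V E x z y)) * ?n ^ 3
      \<le> (\<Sum>q\<in>I. real (card (C q))) * ?n ^ 3"
    by (intro mult_right_mono) (auto simp flip: of_nat_sum)
  also have "\<dots> = (\<Sum>q\<in>I. real (card (C q)) * ?n ^ 3)" by (simp add: sum_distrib_right)
  also have "\<dots> \<le> (\<Sum>q\<in>I. 2 * ?NM)" by (rule sum_mono) (use bound_C in auto)
  also have "\<dots> = real (card I) * (2 * ?NM)" by simp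
  also have "card I = length a * (r + 1) * (length b * (r + 1))"
    by (simp add: I_def card_cartesian_product algebra_simps)
  finally show ?thesis by simp
qed

lemma reachable_iff_scaled:
  assumes "0 < card V" and "1 \<le> length Hs * r"
  shows "reachable r Hs \<beta> V E x y \<longleftrightarrow>
    \<beta> * real (card V) ^ (length Hs * r) \<le> real (card (path_embeddings r Hs V E x y)) * real (card V)"
proof -
  let ?n = "real (card V)"
  have "?n ^ (length Hs * r) = ?n ^ (length Hs * r - 1) * ?n"
    using assms(2) by (cases "length Hs * r") (auto simp: mult.commute)
  then have eq: "\<beta> * ?n ^ (length Hs * r) = (\<beta> * ?n ^ (length Hs * r - 1)) * ?n" by simp
  show ?thesis unfolding reachable_def eq
    by (rule mult_le_cancel_right_pos[symmetric]) (use assms(1) in simp)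
qed

lemma reachable_mono:
  assumes "reachable r Hs \<beta>' V E x y" and "\<beta> \<le> \<beta>'"
  shows "reachable r Hs \<beta> V E x y"
  using assms order_trans[OF mult_right_mono[OF assms(2)]] unfolding reachable_def by simp

lemma card_compatible_pairs_ge:
  assumes ra: "\<forall>H\<in>set a. rooted_graph r H" and rb: "\<forall>H\<in>set b. rooted_graph r H"
    and na: "a \<noteq> []" and nb: "b \<noteq> []" and fin: "finite V" and Vne: "V \<noteq> {}" and xy: "x \<noteq> y"
    and rA: "reachable r a c1 V E x z" and rB: "reachable r b c2 V E z y"
    and c1: "0 < c1" and c2: "0 < c2"
    and large: "4 * real (length a * (r + 1) * (length b * (r + 1))) \<le> real (card V) * (c1 * c2)"
  shows "finite (compatible_pairs r a b V E x z y) \<and>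
    c1 * c2 / 2 * real (card V) ^ (length (a @ b) * r)
      \<le> real (card (compatible_pairs r a b V E x z y)) * real (card V) ^ 2"
proof -
  let ?A = "path_embeddings r a V E x z" and ?B = "path_embeddings r b V E z y"
  let ?G = "compatible_pairs r a b V E x z y" and ?n = "real (card V)"
  let ?N = "?n ^ (length a * r)" and ?M = "?n ^ (length b * r)"
  have n0: "0 < card V" using fin Vne by (simp add: card_gt_0_iff)
  have aN: "c1 * ?N \<le> real (card ?A) * ?n"
    using rA reachable_iff_scaled[OF n0 path_order_pos[OF ra na]] by simp
  have bM: "c2 * ?M \<le> real (card ?B) * ?n"
    using rB reachable_iff_scaled[OF n0 path_order_pos[OF rb nb]] by simp
  have "0 < c2 * ?M" using c2 n0 by simp
  then have "?B \<noteq> {}" using bM by auto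
  then have zy: "z \<noteq> y" using path_embedding_ends_distinct[OF _ rb nb] by blast
  have fAB: "finite (?A \<times> ?B)"
    using card_path_embeddings_bound[OF ra na fin Vne] card_path_embeddings_bound[OF rb nb fin Vne]
    by blast
  have Gsub: "?G \<subseteq> ?A \<times> ?B" unfolding compatible_pairs_def by auto
  then have fG: "finite ?G" using fAB finite_subset by blast
  have card_G: "real (card ?G) = real (card ?A) * real (card ?B) - real (card (?A \<times> ?B - ?G))"
    using card_Diff_subset[OF fG Gsub] card_mono[OF fAB Gsub]
    by (simp add: card_cartesian_product of_nat_diff)
  have "c1 * ?N * (c2 * ?M) \<le> real (card ?A) * ?n * (real (card ?B) * ?n)"
    by (rule mult_mono[OF aN bM]) (use c1 c2 in auto)
  then have total: "c1 * c2 * (?N * ?M) \<le> real (card ?A) * real (card ?B) * ?n ^ 2"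
    by (simp add: power2_eq_square mult_ac)
  have "real (card (?A \<times> ?B - ?G)) * ?n ^ 2 * ?n
      \<le> 2 * real (length a * (r + 1) * (length b * (r + 1))) * (?N * ?M)"
    using card_colliding_pairs_le[OF ra rb na nb fin Vne xy zy]
    by (simp add: power_numeral_reduce mult_ac)
  also have "\<dots> \<le> (c1 * c2 / 2 * ?n) * (?N * ?M)"
    using large by (intro mult_right_mono) (auto simp: field_simps)
  also have "\<dots> = c1 * c2 / 2 * (?N * ?M) * ?n" by (simp add: mult_ac)
  finally have bad: "real (card (?A \<times> ?B - ?G)) * ?n ^ 2 \<le> c1 * c2 / 2 * (?N * ?M)"
    using n0 by (simp add: mult_le_cancel_right_pos)
  have "?N * ?M = ?n ^ (length (a @ b) * r)" by (simp add: algebra_simps power_add)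
  then show ?thesis using fG total bad card_G by (simp add: left_diff_distrib)
qed

lemma reachable_concat:
  assumes ra: "\<forall>H\<in>set a. rooted_graph r H" and rb: "\<forall>H\<in>set b. rooted_graph r H"
    and na: "a \<noteq> []" and nb: "b \<noteq> []" and fin: "finite V" and "x \<in> V" and xy: "x \<noteq> y"
    and fU: "finite U" and reach: "\<forall>z\<in>U. reachable r a c1 V E x z \<and> reachable r b c2 V E z y"
    and c1: "0 < c1" and c2: "0 < c2"
    and large: "4 * real (length a * (r + 1) * (length b * (r + 1))) \<le> real (card V) * (c1 * c2)"
  shows "reachable r (a @ b) (real (card U) / real (card V) * (c1 * c2 / 2)) V E x y"
proof -
  let ?G = "\<lambda>z. compatible_pairs r a b V E x z y" and ?n = "real (card V)"
  let ?T = "length (a @ b) * r"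
  have Vne: "V \<noteq> {}" using \<open>x \<in> V\<close> by auto
  then have n0: "0 < card V" using fin by (simp add: card_gt_0_iff)
  note bound = card_compatible_pairs_ge[OF ra rb na nb fin Vne xy _ _ c1 c2 large]
  have bound_U: "finite (?G z) \<and> c1 * c2 / 2 * ?n ^ ?T \<le> real (card (?G z)) * ?n ^ 2"
    if "z \<in> U" for z
    using bound reach that by blast
  have ends_at: "case_prod (fst p) (path_end a) = z" if "p \<in> ?G z" for p z
  proof -
    have "fst p \<in> path_embeddings r a V E x z"
      using that by (simp add: compatible_pairs_def mem_Times_iff)
    then show ?thesis by (rule path_embedding_at_start_end(2))
  qed
  have "card (\<Union>z\<in>U. ?G z) = (\<Sum>z\<in>U. card (?G z))"
  proof (rule card_UN_disjoint[OF fU])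
    show "\<forall>z\<in>U. finite (?G z)" using bound_U by blast
    show "\<forall>z1\<in>U. \<forall>z2\<in>U. z1 \<noteq> z2 \<longrightarrow> ?G z1 \<inter> ?G z2 = {}" using ends_at by blast
  qed
  then have "real (card (\<Union>z\<in>U. ?G z)) * ?n ^ 2 = (\<Sum>z\<in>U. real (card (?G z)) * ?n ^ 2)"
    by (simp add: sum_distrib_right)
  moreover have "(\<Sum>z\<in>U. c1 * c2 / 2 * ?n ^ ?T) \<le> (\<Sum>z\<in>U. real (card (?G z)) * ?n ^ 2)"
    using bound_U by (intro sum_mono) blast
  moreover have "real (card (\<Union>z\<in>U. ?G z)) * ?n ^ 2
      \<le> real (card (path_embeddings r (a @ b) V E x y)) * ?n ^ 2"
    using card_UN_compatible_pairs_le[OF ra rb na nb fin Vne] by (intro mult_right_mono) auto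
  ultimately have "real (card U) * (c1 * c2 / 2 * ?n ^ ?T)
      \<le> real (card (path_embeddings r (a @ b) V E x y)) * ?n * ?n"
    by (simp add: power2_eq_square mult.assoc)
  then have "real (card U) / ?n * (c1 * c2 / 2) * ?n ^ ?T * ?n
      \<le> real (card (path_embeddings r (a @ b) V E x y)) * ?n * ?n"
    using n0 by (simp add: field_simps)
  then have "real (card U) / ?n * (c1 * c2 / 2) * ?n ^ ?T
      \<le> real (card (path_embeddings r (a @ b) V E x y)) * ?n"
    by (rule mult_right_le_imp_le) (use n0 in simp)
  moreover have "1 \<le> ?T" by (rule path_order_pos) (use ra rb na in auto)
  ultimately show ?thesis using reachable_iff_scaled[OF n0] by blast
qed

lemma exists_large_fibre:
  assumes "finite U" and "finite I" and "I \<noteq> {}" and "f ` U \<subseteq> I"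
  shows "\<exists>q\<in>I. card U \<le> card {z\<in>U. f z = q} * card I"
proof (rule ccontr)
  assume "\<not> ?thesis"
  then have small: "card {z\<in>U. f z = q} * card I < card U" if "q \<in> I" for q
    using that by (simp add: not_le)
  have "U = (\<Union>q\<in>I. {z\<in>U. f z = q})" using assms(4) by auto
  then have "card U * card I \<le> (\<Sum>q\<in>I. card {z\<in>U. f z = q}) * card I"
    using card_UN_le[OF assms(2), of "\<lambda>q. {z\<in>U. f z = q}"] by (metis mult_le_mono1)
  also have "\<dots> = (\<Sum>q\<in>I. card {z\<in>U. f z = q} * card I)" by (rule sum_distrib_right)
  also have "\<dots> < (\<Sum>q\<in>I. card U)" using small assms(2,3) by (intro sum_strict_mono) auto
  finally show False by simp
qed

lemma common_path_types:
  assumes "finite Hx" and "finite Hy" and "finite U" and "U \<noteq> {}"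
    and "\<forall>z\<in>U. reachable_set r Hx \<beta>x V E x z \<and> reachable_set r Hy \<beta>y V E z y"
  obtains a b U' where "a \<in> Hx" and "b \<in> Hy" and "U' \<subseteq> U"
    and "card U \<le> card U' * (card Hx * card Hy)"
    and "\<forall>z\<in>U'. reachable r a \<beta>x V E x z \<and> reachable r b \<beta>y V E z y"
proof -
  have "\<forall>z\<in>U. \<exists>q. q \<in> Hx \<times> Hy \<and> reachable r (fst q) \<beta>x V E x z \<and> reachable r (snd q) \<beta>y V E z y"
  proof
    fix z assume "z \<in> U"
    then obtain a b where "a \<in> Hx" "reachable r a \<beta>x V E x z" "b \<in> Hy" "reachable r b \<beta>y V E z y"
      using assms(5) unfolding reachable_set_def by blast
    then show "\<exists>q. q \<in> Hx \<times> Hy \<and> reachable r (fst q) \<beta>x V E x z \<and> reachable r (snd q) \<beta>y V E z y"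
      by (intro exI[of _ "(a, b)"]) simp
  qed
  from bchoice[OF this] obtain types where types: "\<forall>z\<in>U. types z \<in> Hx \<times> Hy
      \<and> reachable r (fst (types z)) \<beta>x V E x z \<and> reachable r (snd (types z)) \<beta>y V E z y"
    by blast
  then have "types ` U \<subseteq> Hx \<times> Hy" by blast
  moreover from this have "Hx \<times> Hy \<noteq> {}" using assms(4) by blast
  ultimately obtain q where q: "q \<in> Hx \<times> Hy"
    and large: "card U \<le> card {z\<in>U. types z = q} * card (Hx \<times> Hy)"
    using exists_large_fibre[OF assms(3), of "Hx \<times> Hy" types] assms(1,2) by blast
  obtain a b where ab: "q = (a, b)" by (cases q)
  show ?thesis
  proof (rule that[of a b "{z\<in>U. types z = q}"])
    show "a \<in> Hx" "b \<in> Hy" using q ab by simp_all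
    show "card U \<le> card {z\<in>U. types z = q} * (card Hx * card Hy)"
      using large by (simp add: card_cartesian_product)
    show "\<forall>z\<in>{z\<in>U. types z = q}. reachable r a \<beta>x V E x z \<and> reachable r b \<beta>y V E z y"
      using types ab by auto
  qed auto
qed

lemma reachable_set_concat:
  assumes fin_Hx: "finite Hx" and fin_Hy: "finite Hy"
    and paths: "\<forall>Hs\<in>Hx \<union> Hy. Hs \<noteq> [] \<and> (\<forall>H\<in>set Hs. rooted_graph r H)"
    and \<beta>x: "0 < \<beta>x" and \<beta>y: "0 < \<beta>y" and \<epsilon>: "0 < \<epsilon>"
    and fin: "finite V" and "x \<in> V" and xy: "x \<noteq> y" and "U \<subseteq> V"
    and cU: "\<epsilon> * real (card V) \<le> real (card U)"
    and reach: "\<forall>z\<in>U. reachable_set r Hx \<beta>x V E x z \<and> reachable_set r Hy \<beta>y V E z y"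
    and large: "\<forall>a\<in>Hx. \<forall>b\<in>Hy.
      4 * real (length a * (r + 1) * (length b * (r + 1))) \<le> real (card V) * (\<beta>x * \<beta>y)"
  shows "reachable_set r (vec_plus Hx Hy)
    (\<epsilon> * \<beta>x * \<beta>y / (2 * real (card Hx) * real (card Hy))) V E x y"
proof -
  let ?n = "real (card V)" and ?t = "real (card Hx) * real (card Hy)"
  have n_pos: "0 < ?n" using fin \<open>x \<in> V\<close> by (auto simp: card_gt_0_iff)
  have fU: "finite U" using \<open>U \<subseteq> V\<close> fin finite_subset by blast
  have "0 < \<epsilon> * ?n" using \<epsilon> n_pos by simp
  then have "U \<noteq> {}" using cU by auto
  then obtain a b U' where ab: "a \<in> Hx" "b \<in> Hy" and "U' \<subseteq> U"
    and cU': "card U \<le> card U' * (card Hx * card Hy)"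
    and reach': "\<forall>z\<in>U'. reachable r a \<beta>x V E x z \<and> reachable r b \<beta>y V E z y"
    using common_path_types[OF fin_Hx fin_Hy fU _ reach] by blast
  have "reachable r (a @ b) (real (card U') / ?n * (\<beta>x * \<beta>y / 2)) V E x y"
    using paths ab large \<open>U' \<subseteq> U\<close> fU
    by (intro reachable_concat[OF _ _ _ _ fin \<open>x \<in> V\<close> xy _ reach' \<beta>x \<beta>y])
      (auto intro: finite_subset)
  moreover have "\<epsilon> * \<beta>x * \<beta>y / (2 * real (card Hx) * real (card Hy))
      \<le> real (card U') / ?n * (\<beta>x * \<beta>y / 2)"
  proof -
    have "0 < card Hx" "0 < card Hy" using ab fin_Hx fin_Hy card_gt_0_iff by blast+
    then have t_pos: "0 < ?t" by simp
    have "real (card U) \<le> real (card U' * (card Hx * card Hy))" using cU' by (simp only: of_nat_le_iff)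
    then have "\<epsilon> * ?n \<le> real (card U') * ?t" using cU by simp
    then have "\<epsilon> / ?t \<le> real (card U') / ?n" using t_pos n_pos by (simp add: field_simps)
    then have "\<epsilon> / ?t * (\<beta>x * \<beta>y / 2) \<le> real (card U') / ?n * (\<beta>x * \<beta>y / 2)"
      using \<beta>x \<beta>y by (intro mult_right_mono) auto
    then show ?thesis by (simp add: field_simps)
  qed
  moreover have "a @ b \<in> vec_plus Hx Hy" using ab unfolding vec_plus_def by blast
  ultimately show ?thesis unfolding reachable_set_def by (blast intro: reachable_mono)
qed

theorem lemma6p10:
  fixes r :: nat and Hx Hy :: "rgraph list set" and \<beta>x \<beta>y \<epsilon> :: real
  assumes "finite Hx" and "finite Hy"
    and "\<forall>Hs\<in>Hx \<union> Hy. Hs \<noteq> [] \<and> (\<forall>H\<in>set Hs. rooted_graph r H)"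
    and "\<beta>x > 0" and "\<beta>y > 0" and "\<epsilon> > 0"
  shows "\<exists>n0::nat. \<forall>V E (n::nat) x y U.
           sgraph V E \<longrightarrow> card V = n \<longrightarrow> n \<ge> n0 \<longrightarrow>
           x \<in> V \<longrightarrow> y \<in> V \<longrightarrow> x \<noteq> y \<longrightarrow> U \<subseteq> V \<longrightarrow> real (card U) \<ge> \<epsilon> * real n \<longrightarrow>
           (\<forall>z\<in>U. reachable_set r Hx \<beta>x V E x z \<and> reachable_set r Hy \<beta>y V E z y) \<longrightarrow>
           reachable_set r (vec_plus Hx Hy)
             (\<epsilon> * \<beta>x * \<beta>y / (2 * real (card Hx) * real (card Hy))) V E x y"
proof -
  define L where "L = (\<Sum>Hs\<in>Hx \<union> Hy. length Hs)"
  \<comment> \<open>beyond \<open>n0\<close> the colliding pairs are at most half of all pairs\<close>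
  define n0 where "n0 = nat \<lceil>4 * real ((L * (r + 1)) ^ 2) / (\<beta>x * \<beta>y)\<rceil>"
  have "4 * real (length a * (r + 1) * (length b * (r + 1))) \<le> real n * (\<beta>x * \<beta>y)"
    if "a \<in> Hx" "b \<in> Hy" "n0 \<le> n" for a b n
  proof -
    have "length a \<le> L" "length b \<le> L"
      unfolding L_def using assms(1,2) that by (auto intro: member_le_sum)
    then have "length a * (r + 1) * (length b * (r + 1)) \<le> (L * (r + 1)) ^ 2"
      unfolding power2_eq_square by (intro mult_le_mono) simp_all
    then have "4 * real (length a * (r + 1) * (length b * (r + 1))) \<le> 4 * real ((L * (r + 1)) ^ 2)"
      by (simp only: of_nat_le_iff mult_le_cancel_left_pos zero_less_numeral)
    also have "\<dots> \<le> real n * (\<beta>x * \<beta>y)"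
      using \<open>n0 \<le> n\<close> assms(4,5) unfolding n0_def by (simp add: pos_divide_le_eq nat_le_iff ceiling_le_iff)
    finally show ?thesis .
  qed
  then show ?thesis
    using reachable_set_concat[OF assms] by (intro exI[of _ n0]) (auto simp: sgraph_def)
qed

end
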